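(* Let $E$ be a separable real Hilbert space with $\dim E\geq 2$. For a measure $\mu\in\mathcal{W}_1(E)$ the following are equivalent: (i) $\mu$ is a Dirac measure; (ii) for every $\nu\in\mathcal{W}_1(E)$ with $\nu\neq\mu$ there exists $\eta\in\mathcal{W}_1(E)$ such that $d_{\mathcal{W}_1}(\mu,\nu)=d_{\mathcal{W}_1}(\nu,\eta)=\tfrac12 d_{\mathcal{W}_1}(\mu,\eta)$.
   Context: $\mathcal{W}_1(E)$ is the set of Borel probability measures $\mu$ on $E$ with $\int_E\|x\|\,d\mu(x)<\infty$, equipped with the distance $d_{\mathcal{W}_1}(\mu,\nu)=\inf_{\pi\in\Pi(\mu,\nu)}\int_{E\times E}\|x-y\|\,d\pi(x,y)$, where $\Pi(\mu,\nu)$ is the set of Borel probability measures on $E\times E$ with marginals $\mu$ and $\nu$. *)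

theory Defs
  imports "HOL-Probability.Probability"
begin

definition W1_space :: "'a::real_normed_vector measure set" where
  "W1_space = {\<mu>. sets \<mu> = sets borel \<and> prob_space \<mu> \<and>
                    (\<integral>\<^sup>+ x. ennreal (norm x) \<partial>\<mu>) < \<infinity>}"

definition couplings :: "'a::real_normed_vector measure \<Rightarrow> 'a measure \<Rightarrow> ('a \<times> 'a) measure set" where
  "couplings \<mu> \<nu> = {\<pi>. sets \<pi> = sets (borel \<Otimes>\<^sub>M borel) \<and> prob_space \<pi> \<and>
                        distr \<pi> borel fst = \<mu> \<and> distr \<pi> borel snd = \<nu>}"

definition W1_dist :: "'a::real_normed_vector measure \<Rightarrow> 'a measure \<Rightarrow> ennreal" where
  "W1_dist \<mu> \<nu> = (INF \<pi>\<in>couplings \<mu> \<nu>. \<integral>\<^sup>+ p. ennreal (norm (fst p - snd p)) \<partial>\<pi>)"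

end

theory Submission
  imports Defs
begin

(* If mu is the Dirac measure at x, push nu forward by the dilation y -> x + 2 (y - x): this
   doubles every distance to x, and the graph of the dilation couples nu with its image at cost
   W1(delta_x, nu), so nu is a W1-midpoint of delta_x and the image.

   Conversely, let mu be non-Dirac and x arbitrary, and apply (ii) to nu = delta_x.  The product
   coupling of mu and eta costs at least W1(mu, eta) = W1(mu, delta_x) + W1(delta_x, eta), which is
   the integral of the detour |y - x| + |x - z|; since |y - z| never exceeds the detour, equality
   holds almost everywhere.  In an inner product space this makes y - x and x - z parallel, and
   choosing z <> x in the support of eta shows that mu lives on a line through x.  Doing this for
   x = 0 and for a point f off the first line (which exists as dim E >= 2) puts mu on two distinct
   lines, hence on a single point. *)

lemma in_span_if_norm_scaleR_eq:
  fixes u w :: "'a::real_normed_vector"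
  assumes "norm u *\<^sub>R w = norm w *\<^sub>R u" "w \<noteq> 0"
  shows "u \<in> span {w}"
proof -
  have "u = (1 / norm w) *\<^sub>R (norm w *\<^sub>R u)"
    using assms(2) by simp
  also have "\<dots> = (norm u / norm w) *\<^sub>R w"
    by (simp flip: assms(1))
  finally show ?thesis
    by (metis span_base span_scale singletonI)
qed

lemma eq_if_on_two_lines:
  fixes f w\<^sub>1 w\<^sub>2 y y' :: "'a::real_vector"
  assumes "f \<notin> span {w\<^sub>1}" "y \<in> span {w\<^sub>1}" "y' \<in> span {w\<^sub>1}" "y - f \<in> span {w\<^sub>2}" "y' - f \<in> span {w\<^sub>2}"
  shows "y = y'"
proof (rule ccontr)
  assume "y \<noteq> y'"
  obtain b b' where b: "y - f = b *\<^sub>R w\<^sub>2" and b': "y' - f = b' *\<^sub>R w\<^sub>2"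
    using assms(4,5) by (auto simp: span_singleton)
  have diff: "(b - b') *\<^sub>R w\<^sub>2 = y - y'"
    using b b' by (simp add: algebra_simps)
  have "b \<noteq> b'"
  proof
    assume "b = b'"
    then have "y - f = y' - f"
      using b b' by simp
    with \<open>y \<noteq> y'\<close> show False
      by simp
  qed
  then have "w\<^sub>2 = (1 / (b - b')) *\<^sub>R (y - y')"
    by (simp flip: diff)
  then have "w\<^sub>2 \<in> span {w\<^sub>1}"
    using assms(2,3) by (simp add: span_diff span_scale)
  then have "y - f \<in> span {w\<^sub>1}"
    using b by (simp add: span_scale)
  then have "f \<in> span {w\<^sub>1}"
    using assms(2) span_diff by fastforce
  with assms(1) show False ..
qed

lemma exists_not_in_span_singleton:
  fixes u v w :: "'a::real_vector"
  assumes "independent {u, v}" "u \<noteq> v"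
  shows "\<exists>f. f \<notin> span {w}"
proof (rule ccontr)
  assume "\<nexists>f. f \<notin> span {w}"
  then have "{u, v} \<subseteq> span {w}"
    by blast
  from independent_span_bound[OF _ assms(1) this] have "card {u, v} \<le> card {w}"
    by simp
  with assms(2) show False
    by simp
qed

lemma AE_eq_if_AE_le_nn_integral_ge:
  assumes [measurable]: "f \<in> borel_measurable M" "g \<in> borel_measurable M"
    and le: "AE x in M. f x \<le> g x"
    and ge: "(\<integral>\<^sup>+ x. g x \<partial>M) \<le> (\<integral>\<^sup>+ x. f x \<partial>M)" and finite: "(\<integral>\<^sup>+ x. g x \<partial>M) \<noteq> \<infinity>"
  shows "AE x in M. f x = g x"
proof -
  have "(\<integral>\<^sup>+ x. f x \<partial>M) \<noteq> \<infinity>"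
    using nn_integral_mono_AE[OF le] finite by (auto simp: top_unique)
  have "AE x in M. g x \<le> f x"
  proof (rule ccontr)
    assume "\<not> (AE x in M. g x \<le> f x)"
    with \<open>(\<integral>\<^sup>+ x. f x \<partial>M) \<noteq> \<infinity>\<close> le have "(\<integral>\<^sup>+ x. f x \<partial>M) < (\<integral>\<^sup>+ x. g x \<partial>M)"
      by (intro nn_integral_less) auto
    with ge show False
      by simp
  qed
  with le show ?thesis
    by eventually_elim (rule antisym)
qed

lemma W1_spaceD:
  assumes "\<mu> \<in> W1_space"
  shows "sets \<mu> = sets borel" "prob_space \<mu>" "(\<integral>\<^sup>+ y. ennreal (norm y) \<partial>\<mu>) < \<infinity>"
  using assms unfolding W1_space_def by auto

lemma return_in_W1_space: "return borel x \<in> W1_space"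
  unfolding W1_space_def by (auto simp: prob_space_return nn_integral_return)

lemma W1_space_nn_integral_norm_diff_finite:
  fixes \<mu> :: "'a::real_normed_vector measure"
  assumes "\<mu> \<in> W1_space"
  shows "(\<integral>\<^sup>+ y. ennreal (norm (x - y)) \<partial>\<mu>) < \<infinity>"
proof -
  note \<mu> = W1_spaceD[OF assms]
  have [measurable_cong]: "sets \<mu> = sets borel" by (fact \<mu>(1))
  have "(\<integral>\<^sup>+ y. ennreal (norm (x - y)) \<partial>\<mu>) \<le> (\<integral>\<^sup>+ y. ennreal (norm x) + ennreal (norm y) \<partial>\<mu>)"
    by (intro nn_integral_mono) (simp add: norm_triangle_ineq4 flip: ennreal_plus)
  also have "\<dots> = ennreal (norm x) + (\<integral>\<^sup>+ y. ennreal (norm y) \<partial>\<mu>)"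
    using \<mu>(2) by (subst nn_integral_add) (auto simp: prob_space.emeasure_space_1)
  also have "\<dots> < \<infinity>"
    using \<mu>(3) by (simp add: less_top)
  finally show ?thesis .
qed

lemma distr_homothety_in_W1_space:
  fixes \<nu> :: "'a::{real_normed_vector, second_countable_topology} measure"
  assumes "\<nu> \<in> W1_space"
  shows "distr \<nu> borel (\<lambda>y. x + c *\<^sub>R (y - x)) \<in> W1_space"
proof -
  note \<nu> = W1_spaceD[OF assms]
  have [measurable_cong]: "sets \<nu> = sets borel" by (fact \<nu>(1))
  have "(\<integral>\<^sup>+ z. ennreal (norm z) \<partial>distr \<nu> borel (\<lambda>y. x + c *\<^sub>R (y - x))) =
        (\<integral>\<^sup>+ y. ennreal (norm (x + c *\<^sub>R (y - x))) \<partial>\<nu>)"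
    by (subst nn_integral_distr) auto
  also have "\<dots> \<le> (\<integral>\<^sup>+ y. ennreal (norm x + \<bar>c\<bar> * norm (x - y)) \<partial>\<nu>)"
    using norm_triangle_ineq[of x "c *\<^sub>R (y - x)" for y]
    by (intro nn_integral_mono ennreal_leI) (simp add: norm_minus_commute)
  also have "\<dots> = (\<integral>\<^sup>+ y. ennreal (norm x) + ennreal \<bar>c\<bar> * ennreal (norm (x - y)) \<partial>\<nu>)"
    by (intro nn_integral_cong) (simp add: ennreal_plus ennreal_mult)
  also have "\<dots> = ennreal (norm x) + ennreal \<bar>c\<bar> * (\<integral>\<^sup>+ y. ennreal (norm (x - y)) \<partial>\<nu>)"
    using \<nu>(2) by (subst nn_integral_add) (auto simp: nn_integral_cmult prob_space.emeasure_space_1)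
  also have "\<dots> < \<infinity>"
    using W1_space_nn_integral_norm_diff_finite[OF assms, of x]
    by (simp add: ennreal_mult_less_top)
  finally have "(\<integral>\<^sup>+ z. ennreal (norm z) \<partial>distr \<nu> borel (\<lambda>y. x + c *\<^sub>R (y - x))) < \<infinity>" .
  moreover have "prob_space (distr \<nu> borel (\<lambda>y. x + c *\<^sub>R (y - x)))"
    using \<nu>(2) by (rule prob_space.prob_space_distr) simp
  ultimately show ?thesis
    unfolding W1_space_def by simp
qed

lemma couplings_distr_pair:
  fixes f g :: "'b \<Rightarrow> 'a::{real_normed_vector, second_countable_topology}"
  assumes "prob_space \<rho>" "f \<in> borel_measurable \<rho>" "g \<in> borel_measurable \<rho>"
  shows "distr \<rho> (borel \<Otimes>\<^sub>M borel) (\<lambda>z. (f z, g z)) \<in> couplings (distr \<rho> borel f) (distr \<rho> borel g)"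
  unfolding couplings_def
proof (intro CollectI conjI)
  show "prob_space (distr \<rho> (borel \<Otimes>\<^sub>M borel) (\<lambda>z. (f z, g z)))"
    using assms by (intro prob_space.prob_space_distr) auto
  show "distr (distr \<rho> (borel \<Otimes>\<^sub>M borel) (\<lambda>z. (f z, g z))) borel fst = distr \<rho> borel f"
    using assms by (subst distr_distr) (auto simp: comp_def)
  show "distr (distr \<rho> (borel \<Otimes>\<^sub>M borel) (\<lambda>z. (f z, g z))) borel snd = distr \<rho> borel g"
    using assms by (subst distr_distr) (auto simp: comp_def)
qed simp

lemma W1_dist_distr_le:
  fixes f g :: "'b \<Rightarrow> 'a::{real_normed_vector, second_countable_topology}"
  assumes "prob_space \<rho>" "f \<in> borel_measurable \<rho>" "g \<in> borel_measurable \<rho>"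
  shows "W1_dist (distr \<rho> borel f) (distr \<rho> borel g) \<le> (\<integral>\<^sup>+ z. ennreal (norm (f z - g z)) \<partial>\<rho>)"
proof -
  have "W1_dist (distr \<rho> borel f) (distr \<rho> borel g) \<le>
        (\<integral>\<^sup>+ p. ennreal (norm (fst p - snd p)) \<partial>distr \<rho> (borel \<Otimes>\<^sub>M borel) (\<lambda>z. (f z, g z)))"
    unfolding W1_dist_def by (rule INF_lower[OF couplings_distr_pair[OF assms]])
  also have "\<dots> = (\<integral>\<^sup>+ z. ennreal (norm (f z - g z)) \<partial>\<rho>)"
    using assms by (subst nn_integral_distr) auto
  finally show ?thesis .
qed

lemma nn_integral_couplings_fst:
  assumes "\<pi> \<in> couplings \<mu> \<nu>" "h \<in> borel_measurable borel"
  shows "(\<integral>\<^sup>+ p. h (fst p) \<partial>\<pi>) = (\<integral>\<^sup>+ y. h y \<partial>\<mu>)"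
proof -
  have [measurable_cong]: "sets \<pi> = sets (borel \<Otimes>\<^sub>M borel)"
    and marginal: "distr \<pi> borel fst = \<mu>"
    using assms(1) unfolding couplings_def by auto
  have "(\<integral>\<^sup>+ p. h (fst p) \<partial>\<pi>) = (\<integral>\<^sup>+ y. h y \<partial>distr \<pi> borel fst)"
    using assms(2) by (subst nn_integral_distr) auto
  then show ?thesis
    unfolding marginal .
qed

lemma nn_integral_couplings_snd:
  assumes "\<pi> \<in> couplings \<mu> \<nu>" "h \<in> borel_measurable borel"
  shows "(\<integral>\<^sup>+ p. h (snd p) \<partial>\<pi>) = (\<integral>\<^sup>+ z. h z \<partial>\<nu>)"
proof -
  have [measurable_cong]: "sets \<pi> = sets (borel \<Otimes>\<^sub>M borel)"
    and marginal: "distr \<pi> borel snd = \<nu>"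
    using assms(1) unfolding couplings_def by auto
  have "(\<integral>\<^sup>+ p. h (snd p) \<partial>\<pi>) = (\<integral>\<^sup>+ y. h y \<partial>distr \<pi> borel snd)"
    using assms(2) by (subst nn_integral_distr) auto
  then show ?thesis
    unfolding marginal .
qed

lemma couplings_swap:
  assumes "\<pi> \<in> couplings \<mu> \<nu>"
  shows "distr \<pi> (borel \<Otimes>\<^sub>M borel) (\<lambda>p. (snd p, fst p)) \<in> couplings \<nu> \<mu>"
proof -
  have [measurable_cong]: "sets \<pi> = sets (borel \<Otimes>\<^sub>M borel)" and "prob_space \<pi>"
    and "distr \<pi> borel fst = \<mu>" "distr \<pi> borel snd = \<nu>"
    using assms unfolding couplings_def by auto
  then show ?thesis
    unfolding couplings_def
    by (auto intro!: prob_space.prob_space_distr simp: distr_distr comp_def)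
qed

lemma pair_measure_in_couplings:
  fixes \<mu> \<eta> :: "'a::{real_normed_vector, second_countable_topology} measure"
  assumes "sets \<mu> = sets borel" "prob_space \<mu>" "sets \<eta> = sets borel" "prob_space \<eta>"
  shows "\<mu> \<Otimes>\<^sub>M \<eta> \<in> couplings \<mu> \<eta>"
proof -
  interpret pair_prob_space \<mu> \<eta>
    using assms by (simp add: pair_prob_space_def pair_sigma_finite_def prob_space_imp_sigma_finite)
  have "distr (\<mu> \<Otimes>\<^sub>M \<eta>) borel fst = distr (\<mu> \<Otimes>\<^sub>M \<eta>) \<mu> fst"
    by (rule distr_cong) (auto simp: assms)
  also have "\<dots> = \<mu>"
    by (rule prob_space.distr_pair_fst[OF assms(4)])
  finally have fst: "distr (\<mu> \<Otimes>\<^sub>M \<eta>) borel fst = \<mu>" .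
  have "distr (\<mu> \<Otimes>\<^sub>M \<eta>) borel snd = distr (distr (\<eta> \<Otimes>\<^sub>M \<mu>) (\<mu> \<Otimes>\<^sub>M \<eta>) (\<lambda>(x, y). (y, x))) \<eta> snd"
    by (subst distr_pair_swap[symmetric]) (rule distr_cong; simp add: assms)
  also have "\<dots> = distr (\<eta> \<Otimes>\<^sub>M \<mu>) \<eta> fst"
    by (subst distr_distr) (auto simp: comp_def case_prod_beta measurable_pair_swap')
  also have "\<dots> = \<eta>"
    by (rule prob_space.distr_pair_fst[OF assms(2)])
  finally have snd: "distr (\<mu> \<Otimes>\<^sub>M \<eta>) borel snd = \<eta>" .
  show ?thesis
    unfolding couplings_def using assms fst snd by (simp add: prob_space_pair)
qed

lemma W1_dist_le_swap:
  fixes \<mu> \<nu> :: "'a::{real_normed_vector, second_countable_topology} measure"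
  shows "W1_dist \<nu> \<mu> \<le> W1_dist \<mu> \<nu>"
  unfolding W1_dist_def
proof (rule INF_greatest)
  fix \<pi> assume \<pi>: "\<pi> \<in> couplings \<mu> \<nu>"
  then have [measurable_cong]: "sets \<pi> = sets (borel \<Otimes>\<^sub>M borel)"
    unfolding couplings_def by auto
  have "(INF \<pi>'\<in>couplings \<nu> \<mu>. \<integral>\<^sup>+ p. ennreal (norm (fst p - snd p)) \<partial>\<pi>') \<le>
        (\<integral>\<^sup>+ p. ennreal (norm (fst p - snd p)) \<partial>distr \<pi> (borel \<Otimes>\<^sub>M borel) (\<lambda>p. (snd p, fst p)))"
    by (rule INF_lower[OF couplings_swap[OF \<pi>]])
  also have "\<dots> = (\<integral>\<^sup>+ p. ennreal (norm (fst p - snd p)) \<partial>\<pi>)"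
    by (subst nn_integral_distr) (auto simp: norm_minus_commute)
  finally show "(INF \<pi>'\<in>couplings \<nu> \<mu>. \<integral>\<^sup>+ p. ennreal (norm (fst p - snd p)) \<partial>\<pi>') \<le>
      (\<integral>\<^sup>+ p. ennreal (norm (fst p - snd p)) \<partial>\<pi>)" .
qed

lemma W1_dist_commute:
  fixes \<mu> \<nu> :: "'a::{real_normed_vector, second_countable_topology} measure"
  shows "W1_dist \<mu> \<nu> = W1_dist \<nu> \<mu>"
  by (intro antisym W1_dist_le_swap)

lemma W1_dist_return_left:
  fixes \<rho> :: "'a::{real_normed_vector, second_countable_topology} measure"
  assumes "sets \<rho> = sets borel" "prob_space \<rho>"
  shows "W1_dist (return borel x) \<rho> = (\<integral>\<^sup>+ z. ennreal (norm (x - z)) \<partial>\<rho>)"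
proof -
  have [measurable_cong]: "sets \<rho> = sets borel" by (fact assms(1))
  have cost: "(\<integral>\<^sup>+ p. ennreal (norm (fst p - snd p)) \<partial>\<pi>) = (\<integral>\<^sup>+ z. ennreal (norm (x - z)) \<partial>\<rho>)"
    if \<pi>: "\<pi> \<in> couplings (return borel x) \<rho>" for \<pi>
  proof -
    have [measurable_cong]: "sets \<pi> = sets (borel \<Otimes>\<^sub>M borel)"
      and marginal: "distr \<pi> borel fst = return borel x"
      using \<pi> unfolding couplings_def by auto
    have "AE y in distr \<pi> borel fst. y = x"
      unfolding marginal by (simp add: AE_return)
    then have "AE p in \<pi>. fst p = x"
      by (subst (asm) AE_distr_iff) auto
    then have "(\<integral>\<^sup>+ p. ennreal (norm (fst p - snd p)) \<partial>\<pi>) = (\<integral>\<^sup>+ p. ennreal (norm (x - snd p)) \<partial>\<pi>)"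
      by (intro nn_integral_cong_AE) auto
    also have "\<dots> = (\<integral>\<^sup>+ z. ennreal (norm (x - z)) \<partial>\<rho>)"
      using \<pi> by (rule nn_integral_couplings_snd) simp
    finally show ?thesis .
  qed
  have "distr \<rho> borel (\<lambda>z. x) = return borel x"
    using assms by (intro prob_space.distr_const) auto
  moreover have "distr \<rho> borel (\<lambda>z. z) = \<rho>"
    using assms by (intro distr_id2) auto
  ultimately have "couplings (return borel x) \<rho> \<noteq> {}"
    using couplings_distr_pair[of \<rho> "\<lambda>z. x" "\<lambda>z. z"] assms(2) by auto
  then show ?thesis
    unfolding W1_dist_def by (simp add: cost)
qed

lemma W1_dist_return_triangle:
  fixes \<nu> \<eta> :: "'a::{real_normed_vector, second_countable_topology} measure"
  assumes "sets \<nu> = sets borel" "prob_space \<nu>" "sets \<eta> = sets borel" "prob_space \<eta>"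
  shows "W1_dist (return borel x) \<eta> \<le> W1_dist (return borel x) \<nu> + W1_dist \<nu> \<eta>"
proof (cases "W1_dist (return borel x) \<nu> = \<infinity>")
  case False
  have "W1_dist (return borel x) \<eta> - W1_dist (return borel x) \<nu> \<le> W1_dist \<nu> \<eta>"
    unfolding W1_dist_def[of \<nu> \<eta>]
  proof (rule INF_greatest)
    fix \<pi> assume \<pi>: "\<pi> \<in> couplings \<nu> \<eta>"
    then have [measurable_cong]: "sets \<pi> = sets (borel \<Otimes>\<^sub>M borel)"
      unfolding couplings_def by auto
    have "W1_dist (return borel x) \<eta> = (\<integral>\<^sup>+ p. ennreal (norm (x - snd p)) \<partial>\<pi>)"
      using assms(3,4) nn_integral_couplings_snd[OF \<pi>, of "\<lambda>z. ennreal (norm (x - z))"]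
      by (simp add: W1_dist_return_left)
    also have "\<dots> \<le> (\<integral>\<^sup>+ p. ennreal (norm (x - fst p)) + ennreal (norm (fst p - snd p)) \<partial>\<pi>)"
      by (intro nn_integral_mono) (simp add: norm_diff_triangle_le[OF order_refl order_refl] flip: ennreal_plus)
    also have "\<dots> = W1_dist (return borel x) \<nu> + (\<integral>\<^sup>+ p. ennreal (norm (fst p - snd p)) \<partial>\<pi>)"
      using assms(1,2) nn_integral_couplings_fst[OF \<pi>, of "\<lambda>y. ennreal (norm (x - y))"]
      by (simp add: nn_integral_add W1_dist_return_left)
    finally show "W1_dist (return borel x) \<eta> - W1_dist (return borel x) \<nu> \<le>
        (\<integral>\<^sup>+ p. ennreal (norm (fst p - snd p)) \<partial>\<pi>)"
      using False by (simp add: ennreal_minus_le_iff)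
  qed
  then show ?thesis
    using False by (simp add: ennreal_minus_le_iff)
qed simp

lemma W1_geodesic_from_return_extends:
  fixes \<nu> :: "'a::{real_normed_vector, second_countable_topology} measure"
  assumes \<nu>: "\<nu> \<in> W1_space"
  shows "\<exists>\<eta>\<in>W1_space. W1_dist (return borel x) \<nu> = W1_dist \<nu> \<eta> \<and>
                     W1_dist \<nu> \<eta> = W1_dist (return borel x) \<eta> / 2"
proof
  define \<eta> where "\<eta> = distr \<nu> borel (\<lambda>y. x + 2 *\<^sub>R (y - x))"
  define d where "d = (\<integral>\<^sup>+ y. ennreal (norm (x - y)) \<partial>\<nu>)"
  have sets_\<nu> [measurable_cong]: "sets \<nu> = sets borel" and "prob_space \<nu>"
    using W1_spaceD[OF \<nu>] by auto
  show \<eta>: "\<eta> \<in> W1_space"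
    unfolding \<eta>_def using \<nu> by (rule distr_homothety_in_W1_space)
  have "d \<noteq> \<infinity>"
    unfolding d_def using W1_space_nn_integral_norm_diff_finite[OF \<nu>] by (simp add: less_top)
  have dist_\<nu>: "W1_dist (return borel x) \<nu> = d"
    unfolding d_def using W1_spaceD[OF \<nu>] by (simp add: W1_dist_return_left)
  have "W1_dist (return borel x) \<eta> = (\<integral>\<^sup>+ y. ennreal (norm (x - (x + 2 *\<^sub>R (y - x)))) \<partial>\<nu>)"
    using W1_spaceD[OF \<eta>] unfolding \<eta>_def by (simp add: W1_dist_return_left nn_integral_distr)
  also have "\<dots> = 2 * d"
    unfolding d_def by (simp add: norm_minus_commute ennreal_mult nn_integral_cmult)
  finally have dist_\<eta>: "W1_dist (return borel x) \<eta> = 2 * d" .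
  have "W1_dist \<nu> \<eta> \<le> (\<integral>\<^sup>+ y. ennreal (norm (y - (x + 2 *\<^sub>R (y - x)))) \<partial>\<nu>)"
    using W1_dist_distr_le[of \<nu> "\<lambda>y. y" "\<lambda>y. x + 2 *\<^sub>R (y - x)"] \<open>prob_space \<nu>\<close>
      distr_id2[OF sets_\<nu>[symmetric]]
    unfolding \<eta>_def by simp
  also have "\<dots> = d"
  proof -
    have "y - (x + 2 *\<^sub>R (y - x)) = x - y" for y
      by (simp add: scaleR_2 algebra_simps)
    then show ?thesis
      unfolding d_def by simp
  qed
  finally have "W1_dist \<nu> \<eta> \<le> d" .
  moreover have "d \<le> W1_dist \<nu> \<eta>"
    using W1_dist_return_triangle[of \<nu> \<eta> x] W1_spaceD[OF \<nu>] W1_spaceD[OF \<eta>] \<open>d \<noteq> \<infinity>\<close>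
    by (simp add: dist_\<nu> dist_\<eta> mult_2 ennreal_add_left_cancel_le)
  ultimately have "W1_dist \<nu> \<eta> = d" by (rule antisym)
  then show "W1_dist (return borel x) \<nu> = W1_dist \<nu> \<eta> \<and>
             W1_dist \<nu> \<eta> = W1_dist (return borel x) \<eta> / 2"
    using ennreal_mult_divide_eq[of 2 d] by (simp add: dist_\<nu> dist_\<eta> mult.commute)
qed

lemma AE_norm_diff_eq_add_if_W1_dist_eq_add:
  fixes \<mu> \<eta> :: "'a::{real_normed_vector, second_countable_topology} measure"
  assumes "sets \<mu> = sets borel" "prob_space \<mu>" "sets \<eta> = sets borel" "prob_space \<eta>"
    and sum: "W1_dist \<mu> \<eta> = W1_dist \<mu> (return borel x) + W1_dist (return borel x) \<eta>"
    and finite: "W1_dist \<mu> \<eta> \<noteq> \<infinity>"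
  shows "AE p in \<mu> \<Otimes>\<^sub>M \<eta>. norm (fst p - snd p) = norm (x - fst p) + norm (x - snd p)"
proof -
  let ?P = "\<mu> \<Otimes>\<^sub>M \<eta>"
  have P: "?P \<in> couplings \<mu> \<eta>"
    by (rule pair_measure_in_couplings[OF assms(1-4)])
  have [measurable_cong]: "sets ?P = sets (borel \<Otimes>\<^sub>M borel)"
    using P unfolding couplings_def by auto
  have "(\<integral>\<^sup>+ p. ennreal (norm (x - fst p) + norm (x - snd p)) \<partial>?P) =
        (\<integral>\<^sup>+ p. ennreal (norm (x - fst p)) \<partial>?P) + (\<integral>\<^sup>+ p. ennreal (norm (x - snd p)) \<partial>?P)"
    by (simp add: nn_integral_add)
  also have "\<dots> = W1_dist \<mu> \<eta>"
    using sum nn_integral_couplings_fst[OF P, of "\<lambda>y. ennreal (norm (x - y))"]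
      nn_integral_couplings_snd[OF P, of "\<lambda>z. ennreal (norm (x - z))"]
    by (simp add: W1_dist_return_left W1_dist_commute[of \<mu>] assms)
  finally have detour: "(\<integral>\<^sup>+ p. ennreal (norm (x - fst p) + norm (x - snd p)) \<partial>?P) = W1_dist \<mu> \<eta>" .
  have "AE p in ?P. ennreal (norm (fst p - snd p)) = ennreal (norm (x - fst p) + norm (x - snd p))"
  proof (rule AE_eq_if_AE_le_nn_integral_ge)
    show "AE p in ?P. ennreal (norm (fst p - snd p)) \<le> ennreal (norm (x - fst p) + norm (x - snd p))"
      by (intro AE_I2 ennreal_leI norm_diff_triangle_le[where y = x]) (simp_all add: norm_minus_commute)
    show "(\<integral>\<^sup>+ p. ennreal (norm (x - fst p) + norm (x - snd p)) \<partial>?P) \<le>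
          (\<integral>\<^sup>+ p. ennreal (norm (fst p - snd p)) \<partial>?P)"
      unfolding detour W1_dist_def by (rule INF_lower[OF P])
  qed (use detour finite in simp_all)
  then show ?thesis
    by (rule eventually_mono) (simp del: ennreal_plus)
qed

lemma AE_on_line_if_AE_norm_diff_eq_add:
  fixes \<mu> \<eta> :: "'a::{real_inner, second_countable_topology} measure"
  assumes "sets \<mu> = sets borel" "prob_space \<mu>" "sets \<eta> = sets borel" "prob_space \<eta>"
    and not_return: "\<not> (AE z in \<eta>. z = x)"
    and AE_eq: "AE p in \<mu> \<Otimes>\<^sub>M \<eta>. norm (fst p - snd p) = norm (x - fst p) + norm (x - snd p)"
  shows "\<exists>w. AE y in \<mu>. y - x \<in> span {w}"
proof -
  interpret pair_prob_space \<mu> \<eta>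
    using assms by (simp add: pair_prob_space_def pair_sigma_finite_def prob_space_imp_sigma_finite)
  have [measurable_cong]: "sets \<mu> = sets borel" "sets \<eta> = sets borel"
    using assms by auto
  from AE_eq have
    "AE p in \<mu> \<Otimes>\<^sub>M \<eta>. norm (fst p - x) *\<^sub>R (x - snd p) = norm (x - snd p) *\<^sub>R (fst p - x)"
  proof eventually_elim
    case (elim p)
    then have "norm ((fst p - x) + (x - snd p)) = norm (fst p - x) + norm (x - snd p)"
      by (simp add: norm_minus_commute)
    then show ?case
      by (simp only: norm_triangle_eq)
  qed
  then have "AE y in \<mu>. AE z in \<eta>. norm (y - x) *\<^sub>R (x - z) = norm (x - z) *\<^sub>R (y - x)"
    using AE_pair by fastforce
  then have AE_\<eta>: "AE z in \<eta>. AE y in \<mu>. norm (y - x) *\<^sub>R (x - z) = norm (x - z) *\<^sub>R (y - x)"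
    by (subst (asm) AE_commute) auto
  have "\<exists>z. z \<noteq> x \<and> (AE y in \<mu>. norm (y - x) *\<^sub>R (x - z) = norm (x - z) *\<^sub>R (y - x))"
  proof (rule ccontr)
    assume "\<nexists>z. z \<noteq> x \<and> (AE y in \<mu>. norm (y - x) *\<^sub>R (x - z) = norm (x - z) *\<^sub>R (y - x))"
    then have "AE z in \<eta>. z = x"
      using AE_\<eta> by (auto elim: eventually_mono)
    with not_return show False ..
  qed
  then obtain z where "z \<noteq> x" "AE y in \<mu>. norm (y - x) *\<^sub>R (x - z) = norm (x - z) *\<^sub>R (y - x)"
    by blast
  then show ?thesis
    by (intro exI[of _ "x - z"]) (auto elim!: eventually_mono intro: in_span_if_norm_scaleR_eq)
qed

lemma W1_midpoint_return_imp_AE_on_line: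
  fixes \<mu> \<eta> :: "'a::{real_inner, second_countable_topology} measure"
  assumes \<mu>: "\<mu> \<in> W1_space" and \<eta>: "\<eta> \<in> W1_space" and not_return: "\<mu> \<noteq> return borel x"
    and eq: "W1_dist \<mu> (return borel x) = W1_dist (return borel x) \<eta>"
    and half: "W1_dist (return borel x) \<eta> = W1_dist \<mu> \<eta> / 2"
  shows "\<exists>w. AE y in \<mu>. y - x \<in> span {w}"
proof -
  note \<mu>' = W1_spaceD[OF \<mu>] and \<eta>' = W1_spaceD[OF \<eta>]
  have [measurable_cong]: "sets \<mu> = sets borel" "sets \<eta> = sets borel"
    using \<mu>' \<eta>' by auto
  define a where "a = W1_dist (return borel x) \<eta>"
  have a_\<mu>: "a = (\<integral>\<^sup>+ y. ennreal (norm (x - y)) \<partial>\<mu>)"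
    unfolding a_def eq[symmetric] W1_dist_commute[of \<mu>] using \<mu>' by (simp add: W1_dist_return_left)
  have "a \<noteq> \<infinity>"
    using W1_space_nn_integral_norm_diff_finite[OF \<mu>] by (simp add: a_\<mu> less_top)
  have "a \<noteq> 0"
  proof
    assume "a = 0"
    then have "AE y in \<mu>. y = x"
      by (simp add: a_\<mu> nn_integral_0_iff_AE) (auto elim: eventually_mono)
    then have "\<mu> = return borel x"
      using prob_space.AE_eq_constD(1)[OF \<mu>'(2)] return_sets_cong[OF \<mu>'(1)] by simp
    with not_return show False ..
  qed
  have "W1_dist \<mu> \<eta> = 2 * a"
    using ennreal_mult_divide_eq[of 2 "W1_dist \<mu> \<eta>"]
    by (simp add: a_def half ennreal_times_divide mult.commute)
  then have "AE p in \<mu> \<Otimes>\<^sub>M \<eta>. norm (fst p - snd p) = norm (x - fst p) + norm (x - snd p)"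
    using \<open>a \<noteq> \<infinity>\<close> eq
    by (intro AE_norm_diff_eq_add_if_W1_dist_eq_add \<mu>' \<eta>') (simp_all add: a_def mult_2 ennreal_mult_eq_top_iff)
  moreover have "\<not> (AE z in \<eta>. z = x)"
  proof
    assume "AE z in \<eta>. z = x"
    then have "a = 0"
      unfolding a_def using \<eta>' by (simp add: W1_dist_return_left nn_integral_0_iff_AE) (auto elim: eventually_mono)
    with \<open>a \<noteq> 0\<close> show False ..
  qed
  ultimately show ?thesis
    using \<mu>' \<eta>' by (intro AE_on_line_if_AE_norm_diff_eq_add)
qed

lemma AE_on_two_lines_imp_eq_return:
  fixes \<mu> :: "'a::real_normed_vector measure"
  assumes "sets \<mu> = sets borel" "prob_space \<mu>" "f \<notin> span {w\<^sub>1}"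
    and "AE y in \<mu>. y \<in> span {w\<^sub>1}" "AE y in \<mu>. y - f \<in> span {w\<^sub>2}"
  shows "\<exists>y\<^sub>0. \<mu> = return borel y\<^sub>0"
proof -
  have on_lines: "AE y in \<mu>. y \<in> span {w\<^sub>1} \<and> y - f \<in> span {w\<^sub>2}"
    using assms(4,5) by eventually_elim simp
  obtain y\<^sub>0 where y\<^sub>0: "y\<^sub>0 \<in> span {w\<^sub>1}" "y\<^sub>0 - f \<in> span {w\<^sub>2}"
    using prob_space.AE_False[OF assms(2)] eventually_mono[OF on_lines] by blast
  have "AE y in \<mu>. y = y\<^sub>0"
    using on_lines by eventually_elim (use y\<^sub>0 eq_if_on_two_lines[OF assms(3)] in blast)
  then show ?thesis
    using prob_space.AE_eq_constD(1)[OF assms(2)] return_sets_cong[OF assms(1)] by auto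
qed

theorem lemma3p5:
  fixes \<mu> :: "'a::{real_inner, complete_space, second_countable_topology} measure"
  assumes dim2: "\<exists>u v :: 'a. independent {u, v} \<and> u \<noteq> v"
    and mu: "\<mu> \<in> W1_space"
  shows "(\<exists>x. \<mu> = return borel x) \<longleftrightarrow>
         (\<forall>\<nu>\<in>W1_space. \<nu> \<noteq> \<mu> \<longrightarrow>
            (\<exists>\<eta>\<in>W1_space. W1_dist \<mu> \<nu> = W1_dist \<nu> \<eta> \<and>
                            W1_dist \<nu> \<eta> = W1_dist \<mu> \<eta> / 2))"
proof
  assume "\<exists>x. \<mu> = return borel x"
  then show "\<forall>\<nu>\<in>W1_space. \<nu> \<noteq> \<mu> \<longrightarrow>
      (\<exists>\<eta>\<in>W1_space. W1_dist \<mu> \<nu> = W1_dist \<nu> \<eta> \<and> W1_dist \<nu> \<eta> = W1_dist \<mu> \<eta> / 2)"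
    using W1_geodesic_from_return_extends by blast
next
  assume midpoint: "\<forall>\<nu>\<in>W1_space. \<nu> \<noteq> \<mu> \<longrightarrow>
      (\<exists>\<eta>\<in>W1_space. W1_dist \<mu> \<nu> = W1_dist \<nu> \<eta> \<and> W1_dist \<nu> \<eta> = W1_dist \<mu> \<eta> / 2)"
  show "\<exists>x. \<mu> = return borel x"
  proof (rule ccontr)
    assume not_return: "\<nexists>x. \<mu> = return borel x"
    have on_line: "\<exists>w. AE y in \<mu>. y - x \<in> span {w}" for x
      using midpoint[rule_format, OF return_in_W1_space] not_return
        W1_midpoint_return_imp_AE_on_line[OF mu] by metis
    obtain w\<^sub>1 where "AE y in \<mu>. y \<in> span {w\<^sub>1}"
      using on_line[of 0] by auto
    moreover obtain f where "f \<notin> span {w\<^sub>1}"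
      using exists_not_in_span_singleton dim2 by blast
    moreover obtain w\<^sub>2 where "AE y in \<mu>. y - f \<in> span {w\<^sub>2}"
      using on_line by blast
    ultimately have "\<exists>y\<^sub>0. \<mu> = return borel y\<^sub>0"
      using W1_spaceD[OF mu] by (intro AE_on_two_lines_imp_eq_return)
    with not_return show False ..
  qed
qed

end
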